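(* Let $f:[0,\infty)\to\mathbb{R}$ be convex with $f(1)=0$ and $G:[0,\mathsf{D_m}(f))\to[0,\infty)$ non-decreasing with $G(0)=0$, and suppose $(G,f)$ is divergence-subadditive. Let $p_X\ll q_X$ be distributions on a finite set $\mathcal{X}$. Consider testing $H_0: X^n\sim\prod_{i=1}^n p_X(x_i)$ against $H_1: X^n\sim\prod_{i=1}^n q_X(x_i)$ with a (possibly randomized) decision rule $U(X^n)\in\{0,1\}$, and let $\alpha=\Pr[U=1\mid H_0]$, $\beta=\Pr[U=1\mid H_1]$. Then $$G\big(D_f(\mathrm{Bern}(\alpha)\|\mathrm{Bern}(\beta))\big)\le n\,G\big(D_f(p_X\|q_X)\big).$$
   Context: For distributions $p\ll q$ on a finite set, $D_f(p\|q)=\sum_x q(x) f(p(x)/q(x))$ with $0f(0/0)=0$; $\mathsf{D_m}(f)=f(0)+\lim_{t\to\infty}f(t)/t$. $\mathrm{Bern}(a)$ is the distribution on $\{0,1\}$ assigning probability $a$ to $1$. $(G,f)$ is divergence-subadditive if for all finite sets $\mathcal{Y},\mathcal{Z}$ and distributions $q_Y\ll r_Y$, $q_Z\ll r_Z$: $G(D_f(q_Yq_Z\|r_Yr_Z))\le G(D_f(q_Y\|r_Y))+G(D_f(q_Z\|r_Z))$. *)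

theory Defs
  imports "HOL-Analysis.Analysis"
begin

definition is_dist :: "'a set \<Rightarrow> ('a \<Rightarrow> real) \<Rightarrow> bool" where
  "is_dist A p \<longleftrightarrow> finite A \<and> (\<forall>x\<in>A. 0 \<le> p x) \<and> sum p A = 1"

definition abs_cont :: "'a set \<Rightarrow> ('a \<Rightarrow> real) \<Rightarrow> ('a \<Rightarrow> real) \<Rightarrow> bool" where
  "abs_cont A p q \<longleftrightarrow> (\<forall>x\<in>A. q x = 0 \<longrightarrow> p x = 0)"

text \<open>f-divergence D_f(p||q) = sum_x q(x) f(p(x)/q(x)), with the convention 0 f(0/0) = 0
  (terms with q x = 0 are dropped; under p << q these have p x = 0).\<close>
definition Df :: "(real \<Rightarrow> real) \<Rightarrow> 'a set \<Rightarrow> ('a \<Rightarrow> real) \<Rightarrow> ('a \<Rightarrow> real) \<Rightarrow> real" where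
  "Df f A p q = (\<Sum>x\<in>{x\<in>A. q x \<noteq> 0}. q x * f (p x / q x))"

definition Dm :: "(real \<Rightarrow> real) \<Rightarrow> ereal" where
  "Dm f = ereal (f 0) + Lim at_top (\<lambda>t. ereal (f t / t))"

definition bern :: "real \<Rightarrow> nat \<Rightarrow> real" where
  "bern a k = (if k = 1 then a else 1 - a)"

text \<open>Divergence-subadditivity. The finite alphabets Y, Z are taken as finite subsets of nat;
  since D_f is invariant under relabelling, this covers all finite sets.\<close>
definition div_subadditive :: "(real \<Rightarrow> real) \<Rightarrow> (real \<Rightarrow> real) \<Rightarrow> bool" where
  "div_subadditive G f \<longleftrightarrow>
     (\<forall>(Y::nat set) (Z::nat set) qY rY qZ rZ.
        is_dist Y qY \<and> is_dist Y rY \<and> abs_cont Y qY rY \<and>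
        is_dist Z qZ \<and> is_dist Z rZ \<and> abs_cont Z qZ rZ \<longrightarrow>
        G (Df f (Y \<times> Z) (\<lambda>(y, z). qY y * qZ z) (\<lambda>(y, z). rY y * rZ z))
          \<le> G (Df f Y qY rY) + G (Df f Z qZ rZ))"

text \<open>Probability that the randomized test u (u xs = Pr[U = 1 | X^n = xs]) outputs 1
  when X^n is i.i.d. with marginal p.\<close>
definition test_prob :: "nat \<Rightarrow> ('x \<Rightarrow> real) \<Rightarrow> ('x list \<Rightarrow> real) \<Rightarrow> real" where
  "test_prob n p u = (\<Sum>xs\<in>{xs. length xs = n}. prod_list (map p xs) * u xs)"

end

theory Submission
  imports Defs
begin

text \<open>A randomized test maps the pair of product distributions \<open>(p\<^sup>n, q\<^sup>n)\<close> to
  \<open>(Bern \<alpha>, Bern \<beta>)\<close>; by Jensen's inequality for the perspective \<open>b f(a/b)\<close> of \<open>f\<close>, this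
  can only decrease the f-divergence. Subadditivity of \<open>G \<circ> D\<^sub>f\<close>, applied along the \<open>n\<close>
  coordinates, gives \<open>G(D\<^sub>f(p\<^sup>n\<parallel>q\<^sup>n)) \<le> n G(D\<^sub>f(p\<parallel>q))\<close>. Chaining the two needs
  monotonicity of \<open>G\<close>, which is only available below \<open>D\<^sub>m(f)\<close>. But every f-divergence is
  either \<open>0\<close> or strictly below \<open>D\<^sub>m(f)\<close>: if all likelihood ratios lie in \<open>[0, T]\<close>,
  convexity gives \<open>D\<^sub>f \<le> f(0) + s(T)\<close>, where the slope \<open>s(t) = (f(t) - f(0))/t\<close> is
  nondecreasing with supremum \<open>D\<^sub>m(f) - f(0)\<close>; and \<open>s(T) = s(2T)\<close> forces \<open>f\<close> to be affine
  on \<open>[0, T]\<close>, whence \<open>D\<^sub>f = f(1) = 0\<close>.\<close>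

definition origin_slope :: "(real \<Rightarrow> real) \<Rightarrow> real \<Rightarrow> real" where
  "origin_slope f t = (f t - f 0) / t"

lemma origin_slope_mono:
  assumes f: "convex_on {0..} f" and "0 < s" "s \<le> t"
  shows "origin_slope f s \<le> origin_slope f t"
proof (cases "s = t")
  case False
  then have "(f 0 - f s) / (0 - s) \<le> (f 0 - f t) / (0 - t)"
    using assms by (intro convex_on_slope_le(1)[OF f]) auto
  then show ?thesis
    by (simp add: origin_slope_def diff_divide_distrib)
qed simp

lemma convex_on_le_origin_chord:
  assumes f: "convex_on {0..} f" and "0 \<le> t" "t \<le> T" "0 < T"
  shows "f t \<le> f 0 + origin_slope f T * t"
proof (cases "t = 0")
  case False
  then have "origin_slope f t \<le> origin_slope f T"
    using assms by (intro origin_slope_mono[OF f]) auto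
  with False \<open>0 \<le> t\<close> show ?thesis
    by (simp add: origin_slope_def field_simps)
qed simp

lemma convex_on_eq_origin_chord:
  assumes f: "convex_on {0..} f" and "0 < T" "T < c"
    and slopes: "origin_slope f T = origin_slope f c"
    and t: "0 \<le> t" "t \<le> T"
  shows "f t = f 0 + origin_slope f T * t"
proof (cases "t = T")
  case False
  define s where "s = origin_slope f T"
  have fT: "f T = f 0 + s * T"
    using \<open>0 < T\<close> by (simp add: s_def origin_slope_def)
  have fc: "f c = f 0 + s * c"
    using assms by (simp add: slopes s_def origin_slope_def)
  have "(f t - f c) / (t - c) \<le> (f T - f c) / (T - c)"
    using assms False by (intro convex_on_slope_le(2)[OF f]) auto
  also have "\<dots> = s"
    using assms by (simp add: fT fc field_simps)
  finally have "f 0 + s * t \<le> f t"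
    using assms by (simp add: fc field_simps)
  with convex_on_le_origin_chord[OF f t] \<open>0 < T\<close> show ?thesis
    by (simp add: s_def)
qed (simp add: origin_slope_def)

lemma tendsto_at_top_SUP_mono:
  fixes g :: "real \<Rightarrow> 'a::{complete_linorder, linorder_topology}"
  assumes mono: "\<And>s t. 0 < s \<Longrightarrow> s \<le> t \<Longrightarrow> g s \<le> g t"
  shows "(g \<longlongrightarrow> (SUP t\<in>{0<..}. g t)) at_top"
proof (rule order_tendstoI)
  fix a assume "a < (SUP t\<in>{0<..}. g t)"
  then obtain s where "0 < s" "a < g s"
    by (auto simp: less_SUP_iff)
  show "\<forall>\<^sub>F t in at_top. a < g t"
    using eventually_ge_at_top[of s]
    by eventually_elim (use mono \<open>0 < s\<close> \<open>a < g s\<close> in \<open>auto intro: less_le_trans\<close>)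
next
  fix a assume "(SUP t\<in>{0<..}. g t) < a"
  show "\<forall>\<^sub>F t in at_top. g t < a"
    using eventually_gt_at_top[of 0]
    by eventually_elim (auto intro!: le_less_trans[OF SUP_upper \<open>(SUP t\<in>{0<..}. g t) < a\<close>])
qed

lemma Dm_eq_SUP_origin_slope:
  assumes f: "convex_on {0..} f"
  shows "Dm f = ereal (f 0) + (SUP t\<in>{0<..}. ereal (origin_slope f t))"
proof -
  define L where "L = (SUP t\<in>{0<..}. ereal (origin_slope f t))"
  have "((\<lambda>t. ereal (origin_slope f t)) \<longlongrightarrow> L) at_top"
    unfolding L_def by (rule tendsto_at_top_SUP_mono) (use origin_slope_mono[OF f] in auto)
  moreover have "((\<lambda>t. ereal (f 0 / t)) \<longlongrightarrow> ereal 0) at_top"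
    by (intro tendsto_ereal tendsto_divide_0[OF tendsto_const]
        filterlim_at_top_imp_at_infinity filterlim_ident)
  ultimately have "((\<lambda>t. ereal (origin_slope f t) + ereal (f 0 / t)) \<longlongrightarrow> L + ereal 0) at_top"
    by (intro tendsto_add_ereal_general1) auto
  then have "((\<lambda>t. ereal (f t / t)) \<longlongrightarrow> L) at_top"
    unfolding zero_ereal_def[symmetric] add_0_right
  proof (rule Lim_transform_eventually)
    show "\<forall>\<^sub>F t in at_top. ereal (origin_slope f t) + ereal (f 0 / t) = ereal (f t / t)"
      using eventually_gt_at_top[of 0]
      by eventually_elim (simp add: origin_slope_def field_simps)
  qed
  then show ?thesis
    by (simp add: Dm_def L_def tendsto_Lim)
qed

lemma Dm_ge_origin_slope:
  assumes "convex_on {0..} f" "0 < t"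
  shows "ereal (f 0 + origin_slope f t) \<le> Dm f"
  using add_left_mono[OF SUP_upper[of t "{0<..}" "\<lambda>t. ereal (origin_slope f t)"], of "ereal (f 0)"]
  by (simp add: Dm_eq_SUP_origin_slope[OF assms(1)] assms(2))

definition perspective :: "(real \<Rightarrow> real) \<Rightarrow> real \<Rightarrow> real \<Rightarrow> real" where
  "perspective f a b = (if b = 0 then 0 else b * f (a / b))"

lemma Df_eq_sum_perspective:
  assumes "finite A"
  shows "Df f A p q = (\<Sum>x\<in>A. perspective f (p x) (q x))"
  unfolding Df_def perspective_def using assms
  by (intro sum.mono_neutral_cong_left) auto

lemma perspective_scale:
  assumes "0 \<le> w"
  shows "perspective f (w * a) (w * b) = w * perspective f a b"
  using assms by (cases "w = 0") (auto simp: perspective_def)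

lemma perspective_sum_le:
  assumes f: "convex_on {0..} f" and A: "finite A"
    and p: "\<And>x. x \<in> A \<Longrightarrow> 0 \<le> p x" and q: "\<And>x. x \<in> A \<Longrightarrow> 0 \<le> q x"
    and ac: "\<And>x. x \<in> A \<Longrightarrow> q x = 0 \<Longrightarrow> p x = 0"
  shows "perspective f (sum p A) (sum q A) \<le> (\<Sum>x\<in>A. perspective f (p x) (q x))"
proof -
  define S where "S = {x\<in>A. q x \<noteq> 0}"
  define Q where "Q = sum q A"
  have S: "finite S" "S \<subseteq> A"
    using A by (auto simp: S_def)
  have QS: "Q = sum q S" and PS: "sum p A = sum p S"
    unfolding Q_def S_def using A ac by (auto intro: sum.mono_neutral_right)
  have RS: "(\<Sum>x\<in>A. perspective f (p x) (q x)) = (\<Sum>x\<in>S. q x * f (p x / q x))"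
    using Df_eq_sum_perspective[OF A] by (simp add: Df_def S_def)
  show ?thesis
  proof (cases "Q = 0")
    case True
    then have "S = {}"
      using A q by (auto simp: Q_def S_def sum_nonneg_eq_0_iff)
    then show ?thesis
      unfolding RS using True by (simp add: Q_def perspective_def)
  next
    case False
    then have "Q > 0"
      using q by (simp add: Q_def order.not_eq_order_implies_strict sum_nonneg)
    then have "S \<noteq> {}"
      using QS by auto
    have "f (\<Sum>x\<in>S. (q x / Q) *\<^sub>R (p x / q x)) \<le> (\<Sum>x\<in>S. q x / Q * f (p x / q x))"
      using \<open>Q > 0\<close> S p q
      by (intro convex_on_sum[OF S(1) \<open>S \<noteq> {}\<close> f])
        (auto simp: QS sum_divide_distrib[symmetric])
    moreover have "(\<Sum>x\<in>S. (q x / Q) *\<^sub>R (p x / q x)) = sum p A / Q"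
      unfolding PS sum_divide_distrib by (intro sum.cong) (auto simp: S_def)
    moreover have "(\<Sum>x\<in>S. q x / Q * f (p x / q x)) = (\<Sum>x\<in>S. q x * f (p x / q x)) / Q"
      by (simp add: sum_divide_distrib)
    ultimately have "Q * f (sum p A / Q) \<le> (\<Sum>x\<in>S. q x * f (p x / q x))"
      using \<open>Q > 0\<close> by (simp add: pos_le_divide_eq mult.commute)
    then show ?thesis
      unfolding RS using False by (simp add: perspective_def Q_def)
  qed
qed

lemma Df_nonneg:
  assumes f: "convex_on {0..} f" "f 1 = 0"
    and "is_dist A p" "is_dist A q" "abs_cont A p q"
  shows "0 \<le> Df f A p q"
  using perspective_sum_le[OF f(1), of A p q] assms
  by (simp add: Df_eq_sum_perspective is_dist_def abs_cont_def perspective_def)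

lemma Df_affine:
  assumes p: "is_dist A p" and q: "is_dist A q" and ac: "abs_cont A p q"
  shows "Df (\<lambda>t. a + b * t) A p q = a + b"
proof -
  define S where "S = {x\<in>A. q x \<noteq> 0}"
  have A: "finite A"
    using p by (simp add: is_dist_def)
  have "sum q S = sum q A" "sum p S = sum p A"
    unfolding S_def using A ac by (auto intro: sum.mono_neutral_left simp: abs_cont_def)
  then have "sum q S = 1" "sum p S = 1"
    using p q by (simp_all add: is_dist_def)
  have "Df (\<lambda>t. a + b * t) A p q = (\<Sum>x\<in>S. a * q x + b * p x)"
    unfolding Df_def S_def by (intro sum.cong) (auto simp: field_simps)
  also have "\<dots> = a + b"
    using \<open>sum q S = 1\<close> \<open>sum p S = 1\<close> by (simp add: sum.distrib sum_distrib_left[symmetric])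
  finally show ?thesis .
qed

lemma Df_mono_fun:
  assumes "\<And>x. x \<in> A \<Longrightarrow> 0 \<le> q x"
    and "\<And>x. x \<in> A \<Longrightarrow> q x \<noteq> 0 \<Longrightarrow> f (p x / q x) \<le> g (p x / q x)"
  shows "Df f A p q \<le> Df g A p q"
  unfolding Df_def using assms by (intro sum_mono mult_left_mono) auto

lemma Df_cong_fun:
  assumes "\<And>x. x \<in> A \<Longrightarrow> q x \<noteq> 0 \<Longrightarrow> f (p x / q x) = g (p x / q x)"
  shows "Df f A p q = Df g A p q"
  unfolding Df_def using assms by (intro sum.cong) auto

lemma Df_eq_0_or_less_Dm:
  assumes f: "convex_on {0..} f" "f 1 = 0"
    and p: "is_dist A p" and q: "is_dist A q" and ac: "abs_cont A p q"
  shows "Df f A p q = 0 \<or> ereal (Df f A p q) < Dm f"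
proof -
  have A: "finite A"
    using p by (simp add: is_dist_def)
  define T where "T = Max (insert 1 ((\<lambda>x. p x / q x) ` A))"
  have "1 \<le> T"
    using A by (simp add: T_def)
  have ratio: "0 \<le> p x / q x \<and> p x / q x \<le> T" if "x \<in> A" for x
    using that A p q by (auto simp: T_def is_dist_def)
  define s where "s = origin_slope f T"
  define s' where "s' = origin_slope f (2 * T)"
  have chord: "f t \<le> f 0 + s * t" if "0 \<le> t" "t \<le> T" for t
    using convex_on_le_origin_chord[OF f(1) that] \<open>1 \<le> T\<close> by (simp add: s_def)
  have "Df f A p q \<le> Df (\<lambda>t. f 0 + s * t) A p q"
    using ratio q by (intro Df_mono_fun chord) (auto simp: is_dist_def)
  then have upper: "Df f A p q \<le> f 0 + s"
    by (simp add: Df_affine[OF p q ac])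
  have "s \<le> s'"
    using \<open>1 \<le> T\<close> by (simp add: s_def s'_def origin_slope_mono[OF f(1)])
  then consider "s < s'" | "s = s'"
    by linarith
  then show ?thesis
  proof cases
    case 1
    then have "ereal (Df f A p q) < ereal (f 0 + s')"
      using upper by simp
    also have "\<dots> \<le> Dm f"
      using \<open>1 \<le> T\<close> by (simp add: s'_def Dm_ge_origin_slope[OF f(1)])
    finally show ?thesis ..
  next
    case 2
    then have affine: "f t = f 0 + s * t" if "0 \<le> t" "t \<le> T" for t
      using convex_on_eq_origin_chord[OF f(1), of T "2 * T" t] that \<open>1 \<le> T\<close>
      by (simp add: s_def s'_def mult.commute)
    have "Df f A p q = Df (\<lambda>t. f 0 + s * t) A p q"
      using ratio by (intro Df_cong_fun affine) auto
    also have "\<dots> = f 1"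
      using affine[of 1] \<open>1 \<le> T\<close> by (simp add: Df_affine[OF p q ac])
    finally show ?thesis
      using f(2) by simp
  qed
qed

lemma Df_bern:
  "Df f {0, 1} (bern a) (bern b) = perspective f a b + perspective f (1 - a) (1 - b)"
  by (simp add: Df_eq_sum_perspective bern_def)

lemma is_dist_bern:
  assumes "0 \<le> a" "a \<le> 1"
  shows "is_dist {0, 1} (bern a)"
  using assms by (simp add: is_dist_def bern_def)

lemma abs_cont_bern:
  assumes "b = 0 \<Longrightarrow> a = 0" "b = 1 \<Longrightarrow> a = 1"
  shows "abs_cont {0, 1} (bern a) (bern b)"
  using assms by (auto simp: abs_cont_def bern_def)

definition accept_prob :: "'a set \<Rightarrow> ('a \<Rightarrow> real) \<Rightarrow> ('a \<Rightarrow> real) \<Rightarrow> real" where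
  "accept_prob A p u = (\<Sum>x\<in>A. p x * u x)"

lemma accept_prob_complement:
  assumes "is_dist A p"
  shows "accept_prob A p (\<lambda>x. 1 - u x) = 1 - accept_prob A p u"
  using assms by (simp add: accept_prob_def is_dist_def algebra_simps sum_subtractf)

lemma accept_prob_bounds:
  assumes p: "is_dist A p" and u: "\<And>x. x \<in> A \<Longrightarrow> 0 \<le> u x \<and> u x \<le> 1"
  shows "0 \<le> accept_prob A p u" "accept_prob A p u \<le> 1"
proof -
  show "0 \<le> accept_prob A p u"
    using p u by (auto simp: accept_prob_def is_dist_def intro!: sum_nonneg)
  have "accept_prob A p u \<le> sum p A"
    unfolding accept_prob_def using p u by (intro sum_mono mult_left_le) (auto simp: is_dist_def)
  then show "accept_prob A p u \<le> 1"
    using p by (simp add: is_dist_def)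
qed

lemma accept_prob_eq_0_abs_cont:
  assumes A: "finite A" and ac: "abs_cont A p q"
    and q: "\<And>x. x \<in> A \<Longrightarrow> 0 \<le> q x" and u: "\<And>x. x \<in> A \<Longrightarrow> 0 \<le> u x"
    and "accept_prob A q u = 0"
  shows "accept_prob A p u = 0"
proof -
  have "\<forall>x\<in>A. q x * u x = 0"
    using assms by (simp add: accept_prob_def sum_nonneg_eq_0_iff)
  then show ?thesis
    unfolding accept_prob_def using ac by (intro sum.neutral) (auto simp: abs_cont_def)
qed

lemma abs_cont_bern_accept_prob:
  assumes p: "is_dist A p" and q: "is_dist A q" and ac: "abs_cont A p q"
    and u: "\<And>x. x \<in> A \<Longrightarrow> 0 \<le> u x \<and> u x \<le> 1"
  shows "abs_cont {0, 1} (bern (accept_prob A p u)) (bern (accept_prob A q u))"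
proof (rule abs_cont_bern)
  have A: "finite A" and q_nonneg: "\<And>x. x \<in> A \<Longrightarrow> 0 \<le> q x"
    using q by (auto simp: is_dist_def)
  show "accept_prob A p u = 0" if "accept_prob A q u = 0"
    using accept_prob_eq_0_abs_cont[OF A ac q_nonneg _ that] u by blast
  show "accept_prob A p u = 1" if "accept_prob A q u = 1"
    using accept_prob_eq_0_abs_cont[OF A ac q_nonneg, of "\<lambda>x. 1 - u x"] u that
    by (simp add: accept_prob_complement[OF p] accept_prob_complement[OF q])
qed

lemma perspective_accept_prob_le:
  assumes f: "convex_on {0..} f" and p: "is_dist A p" and q: "is_dist A q"
    and ac: "abs_cont A p q" and u: "\<And>x. x \<in> A \<Longrightarrow> 0 \<le> u x"
  shows "perspective f (accept_prob A p u) (accept_prob A q u)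
           \<le> (\<Sum>x\<in>A. u x * perspective f (p x) (q x))"
proof -
  have "perspective f (\<Sum>x\<in>A. u x * p x) (\<Sum>x\<in>A. u x * q x)
          \<le> (\<Sum>x\<in>A. perspective f (u x * p x) (u x * q x))"
    using p q ac u by (intro perspective_sum_le[OF f]) (auto simp: is_dist_def abs_cont_def)
  also have "\<dots> = (\<Sum>x\<in>A. u x * perspective f (p x) (q x))"
    using u by (intro sum.cong perspective_scale) auto
  finally show ?thesis
    by (simp add: accept_prob_def mult.commute)
qed

lemma Df_bern_accept_prob_le:
  assumes f: "convex_on {0..} f" and p: "is_dist A p" and q: "is_dist A q"
    and ac: "abs_cont A p q" and u: "\<And>x. x \<in> A \<Longrightarrow> 0 \<le> u x \<and> u x \<le> 1"
  shows "Df f {0, 1} (bern (accept_prob A p u)) (bern (accept_prob A q u)) \<le> Df f A p q"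
proof -
  have A: "finite A"
    using p by (simp add: is_dist_def)
  have "Df f {0, 1} (bern (accept_prob A p u)) (bern (accept_prob A q u))
          = perspective f (accept_prob A p u) (accept_prob A q u)
            + perspective f (accept_prob A p (\<lambda>x. 1 - u x)) (accept_prob A q (\<lambda>x. 1 - u x))"
    unfolding Df_bern by (simp add: accept_prob_complement[OF p] accept_prob_complement[OF q])
  also have "\<dots> \<le> (\<Sum>x\<in>A. u x * perspective f (p x) (q x))
                  + (\<Sum>x\<in>A. (1 - u x) * perspective f (p x) (q x))"
    using u by (intro add_mono perspective_accept_prob_le[OF f p q ac]) auto
  also have "\<dots> = Df f A p q"
    by (simp add: Df_eq_sum_perspective[OF A] sum.distrib[symmetric] algebra_simps)
  finally show ?thesis .
qed

lemma Df_bern_accept_prob_nonneg: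
  assumes f: "convex_on {0..} f" "f 1 = 0" and p: "is_dist A p" and q: "is_dist A q"
    and ac: "abs_cont A p q" and u: "\<And>x. x \<in> A \<Longrightarrow> 0 \<le> u x \<and> u x \<le> 1"
  shows "0 \<le> Df f {0, 1} (bern (accept_prob A p u)) (bern (accept_prob A q u))"
  using accept_prob_bounds[OF p u] accept_prob_bounds[OF q u]
  by (intro Df_nonneg[OF f] is_dist_bern abs_cont_bern_accept_prob[OF p q ac u])

lemma Df_reindex_bij_betw:
  assumes h: "bij_betw h A B"
  shows "Df f A (\<lambda>a. p (h a)) (\<lambda>a. q (h a)) = Df f B p q"
proof -
  have "bij_betw h {a\<in>A. q (h a) \<noteq> 0} {b\<in>B. q b \<noteq> 0}"
    using h by (rule bij_betw_subset) (use bij_betw_imp_surj_on[OF h] in auto)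
  then show ?thesis
    unfolding Df_def by (rule sum.reindex_bij_betw)
qed

lemma is_dist_reindex_bij_betw:
  assumes h: "bij_betw h A B"
  shows "is_dist A (\<lambda>a. p (h a)) \<longleftrightarrow> is_dist B p"
  using bij_betw_finite[OF h] bij_betw_imp_surj_on[OF h] sum.reindex_bij_betw[OF h, of p]
  unfolding is_dist_def by auto

lemma abs_cont_reindex_bij_betw:
  assumes h: "bij_betw h A B"
  shows "abs_cont A (\<lambda>a. p (h a)) (\<lambda>a. q (h a)) \<longleftrightarrow> abs_cont B p q"
  using bij_betw_imp_surj_on[OF h] unfolding abs_cont_def by auto

lemma div_subadditiveD:
  fixes Y :: "'a set" and Z :: "'b set"
  assumes G: "div_subadditive G f"
    and Y: "is_dist Y qY" "is_dist Y rY" "abs_cont Y qY rY"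
    and Z: "is_dist Z qZ" "is_dist Z rZ" "abs_cont Z qZ rZ"
  shows "G (Df f (Y \<times> Z) (\<lambda>(y, z). qY y * qZ z) (\<lambda>(y, z). rY y * rZ z))
           \<le> G (Df f Y qY rY) + G (Df f Z qZ rZ)"
proof -
  obtain hY where hY: "bij_betw hY {0..<card Y} Y"
    using ex_bij_betw_nat_finite Y(1) unfolding is_dist_def by blast
  obtain hZ where hZ: "bij_betw hZ {0..<card Z} Z"
    using ex_bij_betw_nat_finite Z(1) unfolding is_dist_def by blast
  have hYZ: "bij_betw (map_prod hY hZ) ({0..<card Y} \<times> {0..<card Z}) (Y \<times> Z)"
    by (rule bij_betw_map_prod[OF hY hZ])
  have "G (Df f ({0..<card Y} \<times> {0..<card Z})
             (\<lambda>(y, z). qY (hY y) * qZ (hZ z)) (\<lambda>(y, z). rY (hY y) * rZ (hZ z)))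
          \<le> G (Df f {0..<card Y} (\<lambda>a. qY (hY a)) (\<lambda>a. rY (hY a)))
            + G (Df f {0..<card Z} (\<lambda>a. qZ (hZ a)) (\<lambda>a. rZ (hZ a)))"
    using G Y Z unfolding div_subadditive_def
      is_dist_reindex_bij_betw[OF hY, symmetric] is_dist_reindex_bij_betw[OF hZ, symmetric]
      abs_cont_reindex_bij_betw[OF hY, symmetric] abs_cont_reindex_bij_betw[OF hZ, symmetric]
    by blast
  moreover have "Df f ({0..<card Y} \<times> {0..<card Z})
                   (\<lambda>(y, z). qY (hY y) * qZ (hZ z)) (\<lambda>(y, z). rY (hY y) * rZ (hZ z))
                 = Df f (Y \<times> Z) (\<lambda>(y, z). qY y * qZ z) (\<lambda>(y, z). rY y * rZ z)"
    using Df_reindex_bij_betw[OF hYZ, of f "\<lambda>(y, z). qY y * qZ z" "\<lambda>(y, z). rY y * rZ z"]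
    by (simp add: case_prod_map_prod)
  ultimately show ?thesis
    by (simp add: Df_reindex_bij_betw[OF hY] Df_reindex_bij_betw[OF hZ])
qed

lemma is_dist_Times:
  assumes "is_dist A p" "is_dist B q"
  shows "is_dist (A \<times> B) (\<lambda>(a, b). p a * q b)"
  using assms
  by (auto simp: is_dist_def sum.cartesian_product[symmetric] sum_product[symmetric])

lemma bij_betw_Cons_lists:
  "bij_betw (\<lambda>(xs, x). x # xs) ({xs. length xs = n} \<times> UNIV) {xs. length xs = Suc n}"
  by (rule bij_betw_byWitness[where f' = "\<lambda>ys. (tl ys, hd ys)"]) (auto simp: length_Suc_conv)

lemma is_dist_prod_list:
  fixes p :: "'x::finite \<Rightarrow> real"
  assumes "is_dist UNIV p"
  shows "is_dist {xs. length xs = n} (\<lambda>xs. prod_list (map p xs))"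
proof (induction n)
  case 0
  then show ?case
    by (simp add: is_dist_def)
next
  case (Suc n)
  have "is_dist ({xs. length xs = n} \<times> UNIV) (\<lambda>(xs, x). prod_list (map p xs) * p x)"
    by (rule is_dist_Times[OF Suc assms])
  then show ?case
    using is_dist_reindex_bij_betw[OF bij_betw_Cons_lists[of n], of "\<lambda>xs. prod_list (map p xs)"]
    by (simp add: case_prod_unfold mult.commute)
qed

lemma abs_cont_prod_list:
  fixes p q :: "'x::finite \<Rightarrow> real"
  assumes "abs_cont UNIV p q"
  shows "abs_cont {xs. length xs = n} (\<lambda>xs. prod_list (map p xs)) (\<lambda>xs. prod_list (map q xs))"
  using assms unfolding abs_cont_def by (auto simp: prod_list_zero_iff)

lemma G_Df_prod_list_le:
  fixes p q :: "'x::finite \<Rightarrow> real"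
  assumes G: "div_subadditive G f" "G 0 = 0" and "f 1 = 0"
    and p: "is_dist UNIV p" and q: "is_dist UNIV q" and ac: "abs_cont UNIV p q"
  shows "G (Df f {xs. length xs = n} (\<lambda>xs. prod_list (map p xs)) (\<lambda>xs. prod_list (map q xs)))
           \<le> real n * G (Df f UNIV p q)"
proof (induction n)
  case 0
  then show ?case
    using assms by (simp add: Df_def)
next
  case (Suc n)
  have "Df f {xs. length xs = Suc n} (\<lambda>xs. prod_list (map p xs)) (\<lambda>xs. prod_list (map q xs))
          = Df f ({xs. length xs = n} \<times> UNIV)
              (\<lambda>(xs, x). prod_list (map p xs) * p x) (\<lambda>(xs, x). prod_list (map q xs) * q x)"
    using Df_reindex_bij_betw[OF bij_betw_Cons_lists[of n], of f "\<lambda>xs. prod_list (map p xs)"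
        "\<lambda>xs. prod_list (map q xs)"]
    by (simp add: case_prod_unfold mult.commute)
  also have "G \<dots> \<le> G (Df f {xs. length xs = n} (\<lambda>xs. prod_list (map p xs)) (\<lambda>xs. prod_list (map q xs)))
                    + G (Df f UNIV p q)"
    by (rule div_subadditiveD[OF G(1) is_dist_prod_list[OF p] is_dist_prod_list[OF q]
          abs_cont_prod_list[OF ac] p q ac])
  finally show ?case
    using Suc by (simp add: algebra_simps)
qed

lemma mono_on_below_Dm_imp_le:
  fixes G :: "real \<Rightarrow> real"
  assumes "mono_on {x. 0 \<le> x \<and> ereal x < Dm f} G"
    and "0 \<le> a" "a \<le> b" "b = 0 \<or> ereal b < Dm f"
  shows "G a \<le> G b"
proof (cases "b = 0")
  case False
  with assms have "ereal b < Dm f"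
    by simp
  moreover have "ereal a < Dm f"
    using calculation \<open>a \<le> b\<close> by (meson ereal_less_eq(3) le_less_trans)
  ultimately show ?thesis
    using assms by (intro mono_onD[OF assms(1)]) auto
qed (use assms in simp)

theorem theorem6:
  fixes f G :: "real \<Rightarrow> real"
    and pX qX :: "'x::finite \<Rightarrow> real"
    and u :: "'x list \<Rightarrow> real"
    and n :: nat
  assumes "convex_on {0..} f"
    and "f 1 = 0"
    and "mono_on {x. 0 \<le> x \<and> ereal x < Dm f} G"
    and "\<forall>x. 0 \<le> x \<and> ereal x < Dm f \<longrightarrow> 0 \<le> G x"
    and "G 0 = 0"
    and "div_subadditive G f"
    and "is_dist UNIV pX" and "is_dist UNIV qX" and "abs_cont UNIV pX qX"
    and "\<forall>xs. length xs = n \<longrightarrow> 0 \<le> u xs \<and> u xs \<le> 1"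
  shows "G (Df f {0, 1} (bern (test_prob n pX u)) (bern (test_prob n qX u)))
           \<le> real n * G (Df f UNIV pX qX)"
proof -
  note f = assms(1,2) and G = assms(6,5)
  define L where "L = {xs :: 'x list. length xs = n}"
  define P where "P = (\<lambda>xs. prod_list (map pX xs))"
  define Q where "Q = (\<lambda>xs. prod_list (map qX xs))"
  have P: "is_dist L P" and Q: "is_dist L Q" and PQ: "abs_cont L P Q"
    unfolding L_def P_def Q_def using assms(7-9) by (auto intro: is_dist_prod_list abs_cont_prod_list)
  have u: "\<And>xs. xs \<in> L \<Longrightarrow> 0 \<le> u xs \<and> u xs \<le> 1"
    using assms(10) by (simp add: L_def)
  have "G (Df f {0, 1} (bern (accept_prob L P u)) (bern (accept_prob L Q u))) \<le> G (Df f L P Q)"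
    by (rule mono_on_below_Dm_imp_le[OF assms(3) Df_bern_accept_prob_nonneg[OF f P Q PQ u]
          Df_bern_accept_prob_le[OF f(1) P Q PQ u] Df_eq_0_or_less_Dm[OF f P Q PQ]])
  also have "\<dots> \<le> real n * G (Df f UNIV pX qX)"
    unfolding L_def P_def Q_def by (rule G_Df_prod_list_le[OF G f(2) assms(7-9)])
  finally show ?thesis
    by (simp add: test_prob_def accept_prob_def L_def P_def Q_def)
qed

end
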